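(* Let $\mathbf u$ be an infinite word over a finite alphabet whose language is closed under reversal and whose defect $D(\mathbf u)$ is finite. Let $q$ be a prefix of $\mathbf u$ such that $D(\mathbf u)=D(q)$, and put $H=|q|+1$. Then $$\mathcal C_{\mathbf u}(H)-\mathcal P_{\mathbf u}(H)=2\,\#\{x\in\mathcal L(\mathbf u): x \text{ is a palindrome},\ |x|<H,\ x\notin\mathcal L(q)\}.$$
   Context: For a finite word $w=w_0\cdots w_{n-1}$ its reversal is $\overline{w}=w_{n-1}\cdots w_0$; $w$ is a palindrome if $w=\overline{w}$ (the empty word is a palindrome). $\mathcal L(v)$ denotes the set of factors of a (finite or infinite) word $v$, and $\mathcal L_n(v)$ those of length $n$; the language of $\mathbf u$ is closed under reversal if $w\in\mathcal L(\mathbf u)$ implies $\overline w\in\mathcal L(\mathbf u)$. $\mathcal C_{\mathbf u}(n)=\#\mathcal L_n(\mathbf u)$ and $\mathcal P_{\mathbf u}(n)$ is the number of palindromes in $\mathcal L_n(\mathbf u)$. The defect of a finite word $w$ is $D(w)=|w|+1-(\text{number of distinct palindromic factors of } w, \text{ including the empty word})$; the defect of an infinite word is $D(\mathbf u)=\sup\{D(w): w \text{ a prefix of } \mathbf u\}$. *)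

theory Defs
  imports Main "HOL-Library.Extended_Nat" "HOL-Library.Sublist"
begin

definition pal :: "'a list \<Rightarrow> bool" where
  "pal w \<longleftrightarrow> rev w = w"

definition lang :: "(nat \<Rightarrow> 'a) \<Rightarrow> 'a list set" where
  "lang u = {w. \<exists>i. w = map u [i..<i + length w]}"

definition lang_n :: "(nat \<Rightarrow> 'a) \<Rightarrow> nat \<Rightarrow> 'a list set" where
  "lang_n u n = {w \<in> lang u. length w = n}"

definition lang_fin :: "'a list \<Rightarrow> 'a list set" where
  "lang_fin w = {x. sublist x w}"

definition closed_rev :: "(nat \<Rightarrow> 'a) \<Rightarrow> bool" where
  "closed_rev u \<longleftrightarrow> (\<forall>w \<in> lang u. rev w \<in> lang u)"

definition complexity :: "(nat \<Rightarrow> 'a) \<Rightarrow> nat \<Rightarrow> nat" where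
  "complexity u n = card (lang_n u n)"

definition pal_complexity :: "(nat \<Rightarrow> 'a) \<Rightarrow> nat \<Rightarrow> nat" where
  "pal_complexity u n = card {w \<in> lang_n u n. pal w}"

text \<open>Defect of a finite word (palindromic factors include the empty word).\<close>
definition defect :: "'a list \<Rightarrow> int" where
  "defect w = int (length w) + 1 - int (card {x \<in> lang_fin w. pal x})"

definition pref :: "(nat \<Rightarrow> 'a) \<Rightarrow> nat \<Rightarrow> 'a list" where
  "pref u n = map u [0..<n]"

text \<open>Defect of an infinite word: supremum over prefixes (defect is always >= 0).\<close>
definition defect_inf :: "(nat \<Rightarrow> 'a) \<Rightarrow> enat" where
  "defect_inf u = (SUP n. enat (nat (defect (pref u n))))"

end

theory Submission
  imports Defs
begin

text \<open>Appending a letter to a finite word creates at most one new palindromic factor, namely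
its longest palindromic suffix when that suffix occurs nowhere else. Hence the defect never
decreases along the prefixes of \<open>u\<close>, and beyond \<open>q\<close>, where it has reached its supremum,
every letter creates exactly one new palindrome \<open>s\<close>. Let \<open>w\<close> be the suffix of length \<open>H\<close>
of the new prefix. If \<open>|s| < H\<close>, then \<open>s\<close> is a suffix of \<open>w\<close> and a prefix of its reversal,
so \<open>w\<close> and its reversal are new non-palindromic factors, while \<open>s\<close> is a new palindrome
shorter than \<open>H\<close>. If \<open>|s| \<ge> H\<close>, then \<open>w\<close> is a suffix of \<open>s\<close>: either \<open>w = s\<close> is a
palindrome, or the reversal of \<open>w\<close> is a proper prefix of \<open>s\<close> and occurred before. So the
number of non-palindromic factors of length \<open>H\<close> (counted together with their reversals)
stays twice the number of palindromic factors shorter than \<open>H\<close> not occurring in \<open>q\<close>, and a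
prefix long enough to contain all factors of length at most \<open>H\<close> yields the identity.\<close>

lemma pal_rev_iff [simp]: "pal (rev w) \<longleftrightarrow> pal w"
  by (auto simp: pal_def)

lemma finite_sublists: "finite {x. sublist x w}"
  by (metis set_sublists_eq List.finite_set)

lemma prefix_rev_if_suffix_pal:
  assumes "pal s" "suffix t s"
  shows "prefix (rev t) s"
  using assms by (metis pal_def suffix_to_prefix)

lemma sublist_if_proper_prefix_of_suffix_snoc:
  assumes "suffix s (xs @ [a])" "prefix t s" "length t < length s"
  shows "sublist t xs"
proof -
  obtain s' where s': "s = s' @ [a]" "suffix s' xs"
    using assms by (cases s rule: rev_cases) (auto simp: suffix_snoc)
  have "prefix t s'"
    using assms(2,3) s'(1) by (auto simp: prefix_snoc)
  with s'(2) show ?thesis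
    by (meson prefix_imp_sublist suffix_imp_sublist sublist_order.order.trans)
qed

lemma sublist_snocI: "sublist x p \<Longrightarrow> sublist x (p @ [a])"
  by (meson sublist_append_rightI sublist_order.order.trans)

lemma suffix_eq_if_length_eq: "suffix y w \<Longrightarrow> length y = length w \<Longrightarrow> y = w"
  by (auto simp: suffix_def)

subsection \<open>Palindromic factors and the defect of finite words\<close>

definition pal_factors :: "'a list \<Rightarrow> 'a list set" where
  "pal_factors w = {x. sublist x w \<and> pal x}"

lemma finite_pal_factors: "finite (pal_factors w)"
  unfolding pal_factors_def by (rule finite_subset[OF _ finite_sublists]) auto

lemma pal_factors_snoc_mono: "pal_factors xs \<subseteq> pal_factors (xs @ [a])"
  unfolding pal_factors_def by (auto intro: sublist_order.order.trans)

lemma new_pal_factor_unique_le: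
  assumes s: "pal s" "sublist s (xs @ [a])" "\<not> sublist s xs"
    and t: "pal t" "sublist t (xs @ [a])" "\<not> sublist t xs"
    and "length t \<le> length s"
  shows "t = s"
proof -
  have s_suffix: "suffix s (xs @ [a])" and t_suffix: "suffix t (xs @ [a])"
    using s t by (auto simp: sublist_snoc)
  have ts: "suffix t s"
    using suffix_length_suffix[OF t_suffix s_suffix \<open>length t \<le> length s\<close>] .
  show ?thesis
  proof (rule ccontr)
    assume "t \<noteq> s"
    then have "length t < length s"
      using ts \<open>length t \<le> length s\<close> suffix_eq_if_length_eq by fastforce
    moreover have "prefix t s"
      using prefix_rev_if_suffix_pal[OF \<open>pal s\<close> ts] \<open>pal t\<close> by (simp add: pal_def)
    ultimately have "sublist t xs"
      using sublist_if_proper_prefix_of_suffix_snoc[OF s_suffix] by blast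
    with t(3) show False ..
  qed
qed

lemma new_pal_factor_unique:
  assumes "pal s" "sublist s (xs @ [a])" "\<not> sublist s xs"
    and "pal t" "sublist t (xs @ [a])" "\<not> sublist t xs"
  shows "t = s"
  using new_pal_factor_unique_le[OF assms] new_pal_factor_unique_le[OF assms(4-6,1-3)]
  by (metis nat_le_linear)

lemma card_pal_factors_snoc_le: "card (pal_factors (xs @ [a])) \<le> card (pal_factors xs) + 1"
proof -
  have "finite (pal_factors (xs @ [a]) - pal_factors xs)"
    using finite_pal_factors by blast
  then have "card (pal_factors (xs @ [a]) - pal_factors xs) \<le> 1"
    using new_pal_factor_unique[of _ xs a]
    unfolding One_nat_def by (subst card_le_Suc0_iff_eq) (auto simp: pal_factors_def)
  then show ?thesis
    using card_Diff_subset[OF finite_pal_factors pal_factors_snoc_mono, of xs a]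
      card_mono[OF finite_pal_factors pal_factors_snoc_mono, of xs a] by linarith
qed

lemma card_pal_factors_le: "card (pal_factors xs) \<le> length xs + 1"
proof (induction xs rule: rev_induct)
  case Nil
  have "pal_factors ([] :: 'a list) = {[]}"
    by (auto simp: pal_factors_def pal_def)
  then show ?case by simp
next
  case (snoc a xs)
  then show ?case
    using card_pal_factors_snoc_le[of xs a] by simp
qed

lemma defect_eq_card_pal_factors: "defect w = int (length w) + 1 - int (card (pal_factors w))"
  unfolding defect_def pal_factors_def lang_fin_def by simp

lemma defect_nonneg: "defect w \<ge> 0"
  using card_pal_factors_le[of w] unfolding defect_eq_card_pal_factors by linarith

lemma defect_snoc_ge: "defect w \<le> defect (w @ [a])"
  using card_pal_factors_snoc_le[of w a] unfolding defect_eq_card_pal_factors by simp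

lemma new_pal_suffix_if_defect_snoc_eq:
  assumes "defect (w @ [a]) = defect w"
  obtains s where "pal s" "suffix s (w @ [a])" "\<not> sublist s w"
proof -
  have "pal_factors (w @ [a]) \<noteq> pal_factors w"
    using assms unfolding defect_eq_card_pal_factors by auto
  then obtain s where "s \<in> pal_factors (w @ [a])" "s \<notin> pal_factors w"
    using pal_factors_snoc_mono[of w a] by blast
  then show ?thesis
    using that by (auto simp: pal_factors_def sublist_snoc)
qed

subsection \<open>The invariant under appending a letter\<close>

text \<open>Closing the factors of \<open>p\<close> under reversal makes the non-palindromes come in pairs
\<open>{w, rev w}\<close>; for \<open>u\<close> itself the closure adds nothing, by \<open>closed_rev\<close>.\<close>

definition nonpal_factors :: "nat \<Rightarrow> 'a list \<Rightarrow> 'a list set" where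
  "nonpal_factors n p = {w. length w = n \<and> \<not> pal w \<and> (sublist w p \<or> sublist (rev w) p)}"

definition fresh_pal_factors :: "nat \<Rightarrow> 'a list \<Rightarrow> 'a list \<Rightarrow> 'a list set" where
  "fresh_pal_factors n q p = {x. sublist x p \<and> pal x \<and> length x < n \<and> \<not> sublist x q}"

lemma finite_nonpal_factors: "finite (nonpal_factors n p)"
proof -
  have "finite ({x. sublist x p} \<union> rev -` {x. sublist x p})"
    using finite_vimageI[OF finite_sublists, of rev] by (simp add: finite_sublists)
  then show ?thesis
    by (rule finite_subset[rotated]) (auto simp: nonpal_factors_def)
qed

lemma finite_fresh_pal_factors: "finite (fresh_pal_factors n q p)"
  unfolding fresh_pal_factors_def by (rule finite_subset[OF _ finite_sublists]) auto

context
  fixes p w :: "'a list" and a :: 'a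
  assumes w_suffix: "suffix w (p @ [a])"
begin

lemma new_factor_snoc_eq_suffix:
  assumes "sublist y (p @ [a])" "\<not> sublist y p" "length y = length w"
  shows "y = w"
proof -
  have "suffix y (p @ [a])"
    using assms(1,2) by (auto simp: sublist_snoc)
  then show ?thesis
    using suffix_length_suffix[OF _ w_suffix] assms(3) suffix_eq_if_length_eq by fastforce
qed

lemma nonpal_factors_snoc_subset:
  "nonpal_factors (length w) (p @ [a]) \<subseteq> insert w (insert (rev w) (nonpal_factors (length w) p))"
proof
  fix y
  assume y: "y \<in> nonpal_factors (length w) (p @ [a])"
  show "y \<in> insert w (insert (rev w) (nonpal_factors (length w) p))"
  proof (cases "sublist y p \<or> sublist (rev y) p")
    case True
    with y show ?thesis by (auto simp: nonpal_factors_def)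
  next
    case False
    with y have "y = w \<or> rev y = w"
      using new_factor_snoc_eq_suffix[of y] new_factor_snoc_eq_suffix[of "rev y"]
      by (auto simp: nonpal_factors_def)
    then show ?thesis by auto
  qed
qed

context
  fixes s :: "'a list"
  assumes s_pal: "pal s" and s_suffix: "suffix s (p @ [a])" and s_new: "\<not> sublist s p"
begin

lemma new_pal_factor_snoc_eq:
  assumes "sublist x (p @ [a])" "pal x" "\<not> sublist x p"
  shows "x = s"
  using new_pal_factor_unique[OF s_pal suffix_imp_sublist[OF s_suffix] s_new assms(2,1,3)] .

lemma card_nonpal_factors_snoc_short:
  assumes "length s < length w"
  shows "card (nonpal_factors (length w) (p @ [a])) = card (nonpal_factors (length w) p) + 2"
proof -
  have "suffix s w"
    using suffix_length_suffix[OF s_suffix w_suffix] assms by simp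
  then have w_new: "\<not> sublist w p"
    using s_new by (meson suffix_imp_sublist sublist_order.order.trans)
  have "prefix s (rev w)"
    using \<open>suffix s w\<close> s_pal by (simp add: suffix_to_prefix pal_def)
  then have rev_w_new: "\<not> sublist (rev w) p"
    using s_new by (meson prefix_imp_sublist sublist_order.order.trans)
  have w_nonpal: "\<not> pal w"
    using new_pal_factor_snoc_eq[of w] suffix_imp_sublist[OF w_suffix] w_new assms by auto
  then have "w \<noteq> rev w"
    by (auto simp: pal_def)
  have "insert w (insert (rev w) (nonpal_factors (length w) p)) \<subseteq> nonpal_factors (length w) (p @ [a])"
    using w_nonpal suffix_imp_sublist[OF w_suffix] by (auto simp: nonpal_factors_def sublist_snocI)
  with nonpal_factors_snoc_subset
  have "nonpal_factors (length w) (p @ [a]) = insert w (insert (rev w) (nonpal_factors (length w) p))"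
    by blast
  moreover have "w \<notin> nonpal_factors (length w) p" "rev w \<notin> nonpal_factors (length w) p"
    using w_new rev_w_new by (auto simp: nonpal_factors_def)
  ultimately show ?thesis
    using \<open>w \<noteq> rev w\<close> by (simp add: card_insert_disjoint finite_nonpal_factors)
qed

lemma nonpal_factors_snoc_long:
  assumes "length w \<le> length s"
  shows "nonpal_factors (length w) (p @ [a]) = nonpal_factors (length w) p"
proof -
  have ws: "suffix w s"
    using suffix_length_suffix[OF w_suffix s_suffix assms] .
  have old: "pal w \<or> sublist (rev w) p"
  proof (cases "length w = length s")
    case True
    then have "w = s"
      using suffix_eq_if_length_eq[OF ws] by blast
    with s_pal show ?thesis by simp
  next
    case False
    with assms have "length (rev w) < length s"
      by simp
    then have "sublist (rev w) p"
      by (rule sublist_if_proper_prefix_of_suffix_snoc[OF s_suffix prefix_rev_if_suffix_pal[OF s_pal ws]])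
    then show ?thesis ..
  qed
  have "y \<in> nonpal_factors (length w) p" if y: "y \<in> nonpal_factors (length w) (p @ [a])" for y
  proof -
    have "y = w \<or> y = rev w \<or> y \<in> nonpal_factors (length w) p"
      using nonpal_factors_snoc_subset y by blast
    moreover have "\<not> pal y" "length y = length w"
      using y by (simp_all add: nonpal_factors_def)
    ultimately show ?thesis
      using old unfolding nonpal_factors_def by auto
  qed
  moreover have "nonpal_factors (length w) p \<subseteq> nonpal_factors (length w) (p @ [a])"
    unfolding nonpal_factors_def by (auto intro: sublist_snocI)
  ultimately show ?thesis by blast
qed

lemma card_fresh_pal_factors_snoc:
  assumes "sublist q p"
  shows "card (fresh_pal_factors n q (p @ [a]))
    = card (fresh_pal_factors n q p) + (if length s < n then 1 else 0)"
proof -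
  have "\<not> sublist s q"
    using s_new assms by (meson sublist_order.order.trans)
  then have s_fresh: "s \<in> fresh_pal_factors n q (p @ [a]) \<longleftrightarrow> length s < n"
    using s_pal suffix_imp_sublist[OF s_suffix] by (simp add: fresh_pal_factors_def)
  have "x \<in> fresh_pal_factors n q p"
    if "x \<in> fresh_pal_factors n q (p @ [a])" "x \<noteq> s" for x
    using that new_pal_factor_snoc_eq[of x] by (auto simp: fresh_pal_factors_def)
  moreover have "fresh_pal_factors n q p \<subseteq> fresh_pal_factors n q (p @ [a])"
    unfolding fresh_pal_factors_def by (auto intro: sublist_snocI)
  ultimately have "fresh_pal_factors n q (p @ [a])
      = (if length s < n then insert s (fresh_pal_factors n q p) else fresh_pal_factors n q p)"
    using s_fresh by auto
  moreover have "s \<notin> fresh_pal_factors n q p"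
    using s_new by (simp add: fresh_pal_factors_def)
  ultimately show ?thesis
    by (simp add: finite_fresh_pal_factors)
qed

lemma card_nonpal_factors_eq_twice_fresh_snoc:
  assumes "card (nonpal_factors (length w) p) = 2 * card (fresh_pal_factors (length w) q p)"
    and "sublist q p"
  shows "card (nonpal_factors (length w) (p @ [a]))
    = 2 * card (fresh_pal_factors (length w) q (p @ [a]))"
proof (cases "length s < length w")
  case True
  then show ?thesis
    using assms card_fresh_pal_factors_snoc[OF assms(2)] card_nonpal_factors_snoc_short by simp
next
  case False
  then show ?thesis
    using assms card_fresh_pal_factors_snoc[OF assms(2)] nonpal_factors_snoc_long by simp
qed


end

end

subsection \<open>Prefixes and factors of infinite words\<close>

lemma pref_Suc: "pref u (Suc k) = pref u k @ [u k]"
  by (simp add: pref_def)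

lemma prefix_pref_mono: "m \<le> n \<Longrightarrow> prefix (pref u m) (pref u n)"
proof -
  assume "m \<le> n"
  then have "pref u n = pref u m @ map u [m..<n]"
    unfolding pref_def by (metis map_append upt_add_eq_append zero_le le_add_diff_inverse)
  then show ?thesis
    by (metis prefixI)
qed

lemma sublist_pref_in_lang: "sublist x (pref u n) \<Longrightarrow> x \<in> lang u"
proof -
  assume "sublist x (pref u n)"
  then obtain ps ss where split: "pref u n = ps @ x @ ss"
    by (auto simp: sublist_def)
  have "length ps + length x \<le> n"
    using arg_cong[OF split, of length] by (simp add: pref_def)
  have "x = take (length x) (drop (length ps) (pref u n))"
    using split by simp
  also have "\<dots> = map u [length ps..<length ps + length x]"
    using \<open>length ps + length x \<le> n\<close> by (simp add: pref_def take_map drop_map)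
  finally show ?thesis
    unfolding lang_def by blast
qed

lemma factor_sublist_pref: "i + m \<le> n \<Longrightarrow> sublist (map u [i..<i + m]) (pref u n)"
proof -
  assume "i + m \<le> n"
  then have "pref u n = map u [0..<i] @ map u [i..<i + m] @ map u [i + m..<n]"
    unfolding pref_def
    by (metis le_add1 le_add_diff_inverse map_append upt_add_eq_append zero_le append_assoc)
  then show ?thesis
    by simp
qed

lemma lang_eventually_sublist_pref:
  assumes "x \<in> lang u"
  shows "eventually (\<lambda>n. sublist x (pref u n)) sequentially"
proof -
  obtain i where x: "x = map u [i..<i + length x]"
    using assms unfolding lang_def by blast
  have "sublist x (pref u n)" if "i + length x \<le> n" for n
    by (subst x) (rule factor_sublist_pref[OF that])
  then show ?thesis
    unfolding eventually_sequentially by blast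
qed

lemma finite_lang_length_le:
  fixes u :: "nat \<Rightarrow> 'a::finite"
  shows "finite {x \<in> lang u. length x \<le> n}"
  by (rule finite_subset[OF _ finite_lists_length_le[OF finite_UNIV, of n]]) auto

lemma eventually_short_factors_sublist_pref:
  fixes u :: "nat \<Rightarrow> 'a::finite"
  shows "eventually (\<lambda>K. \<forall>x \<in> {x \<in> lang u. length x \<le> n}. sublist x (pref u K)) sequentially"
  by (rule eventually_ball_finite[OF finite_lang_length_le]) (simp add: lang_eventually_sublist_pref)

lemma complexity_eq_pal_complexity_plus_nonpal:
  fixes u :: "nat \<Rightarrow> 'a::finite"
  shows "complexity u n = pal_complexity u n + card {w \<in> lang_n u n. \<not> pal w}"
proof -
  have "finite (lang_n u n)"
    by (rule finite_subset[OF _ finite_lang_length_le[of u n]]) (auto simp: lang_n_def)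
  have "lang_n u n = {w \<in> lang_n u n. pal w} \<union> {w \<in> lang_n u n. \<not> pal w}"
    by auto
  also have "card \<dots> = pal_complexity u n + card {w \<in> lang_n u n. \<not> pal w}"
    unfolding pal_complexity_def by (rule card_Un_disjoint) (use \<open>finite (lang_n u n)\<close> in auto)
  finally show ?thesis
    unfolding complexity_def .
qed

subsection \<open>Defect of prefixes\<close>

lemma defect_pref_mono: "m \<le> n \<Longrightarrow> defect (pref u m) \<le> defect (pref u n)"
proof (induction n rule: dec_induct)
  case (step k)
  then show ?case
    using defect_snoc_ge[of "pref u k" "u k"] by (simp add: pref_Suc)
qed simp

lemma defect_pref_le_defect_inf: "enat (nat (defect (pref u n))) \<le> defect_inf u"
  unfolding defect_inf_def by (rule SUP_upper) simp

lemma new_pal_suffix_beyond_attained_defect: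
  assumes "defect_inf u = enat (nat (defect (pref u m)))" and "m \<le> k"
  obtains s where "pal s" "suffix s (pref u (Suc k))" "\<not> sublist s (pref u k)"
proof -
  have bounded: "defect (pref u n) \<le> defect (pref u m)" for n
  proof -
    have "nat (defect (pref u n)) \<le> nat (defect (pref u m))"
      using defect_pref_le_defect_inf[of u n] unfolding assms(1) by simp
    then show ?thesis
      by (simp add: nat_le_eq_zle defect_nonneg)
  qed
  have "defect (pref u k @ [u k]) = defect (pref u k)"
    using defect_pref_mono[OF \<open>m \<le> k\<close>, of u] defect_snoc_ge[of "pref u k" "u k"]
      bounded[of "Suc k"] unfolding pref_Suc by linarith
  from new_pal_suffix_if_defect_snoc_eq[OF this] that show ?thesis
    unfolding pref_Suc .
qed

lemma card_nonpal_factors_eq_twice_fresh_pref: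
  assumes attained: "defect_inf u = enat (nat (defect (pref u m)))" and "m \<le> k"
  shows "card (nonpal_factors (m + 1) (pref u k))
    = 2 * card (fresh_pal_factors (m + 1) (pref u m) (pref u k))"
  using \<open>m \<le> k\<close>
proof (induction k rule: dec_induct)
  case base
  have "nonpal_factors (m + 1) (pref u m) = {}" "fresh_pal_factors (m + 1) (pref u m) (pref u m) = {}"
    using sublist_length_le by (fastforce simp: nonpal_factors_def fresh_pal_factors_def pref_def)+
  then show ?case
    by simp
next
  case (step k)
  obtain s where s: "pal s" "suffix s (pref u k @ [u k])" "\<not> sublist s (pref u k)"
    using new_pal_suffix_beyond_attained_defect[OF attained \<open>m \<le> k\<close>] unfolding pref_Suc by blast
  define w where "w = drop (k - m) (pref u k @ [u k])"
  have w_suffix: "suffix w (pref u k @ [u k])"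
    unfolding w_def by (rule suffix_drop)
  have w_length: "length w = m + 1"
    using \<open>m \<le> k\<close> by (simp add: w_def pref_def)
  have "sublist (pref u m) (pref u k)"
    using prefix_pref_mono[OF \<open>m \<le> k\<close>] by (rule prefix_imp_sublist)
  with step.IH have "card (nonpal_factors (length w) (pref u k @ [u k]))
      = 2 * card (fresh_pal_factors (length w) (pref u m) (pref u k @ [u k]))"
    unfolding w_length by (rule card_nonpal_factors_eq_twice_fresh_snoc[OF w_suffix s, unfolded w_length])
  then show ?case
    unfolding w_length pref_Suc .
qed

lemma nonpal_factors_pref_eq_lang:
  assumes "closed_rev u" and "\<forall>x \<in> lang_n u n. sublist x (pref u K)"
  shows "nonpal_factors n (pref u K) = {w \<in> lang_n u n. \<not> pal w}"
proof (intro set_eqI iffI)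
  fix w
  assume w: "w \<in> nonpal_factors n (pref u K)"
  then have "w \<in> lang u \<or> rev w \<in> lang u"
    by (auto simp: nonpal_factors_def intro: sublist_pref_in_lang)
  then have "w \<in> lang u"
    using assms(1) unfolding closed_rev_def by force
  with w show "w \<in> {w \<in> lang_n u n. \<not> pal w}"
    by (simp add: nonpal_factors_def lang_n_def)
qed (use assms(2) in \<open>auto simp: nonpal_factors_def lang_n_def\<close>)

lemma fresh_pal_factors_pref_eq_lang:
  assumes "\<forall>x \<in> lang u. length x < n \<longrightarrow> sublist x (pref u K)"
  shows "fresh_pal_factors n q (pref u K) = {x \<in> lang u. pal x \<and> length x < n \<and> x \<notin> lang_fin q}"
  using assms sublist_pref_in_lang by (auto simp: fresh_pal_factors_def lang_fin_def)

theorem lemma9: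
  fixes u :: "nat \<Rightarrow> 'a::finite" and q :: "'a list"
  assumes "closed_rev u"
    and "defect_inf u \<noteq> \<infinity>"
    and "q = pref u (length q)"
    and "defect_inf u = enat (nat (defect q))"
    and "H = length q + 1"
  shows "int (complexity u H) - int (pal_complexity u H)
         = 2 * int (card {x \<in> lang u. pal x \<and> length x < H \<and> x \<notin> lang_fin q})"
proof -
  obtain K where "length q \<le> K" and K: "\<forall>x \<in> {x \<in> lang u. length x \<le> H}. sublist x (pref u K)"
    using eventually_conj[OF eventually_ge_at_top eventually_short_factors_sublist_pref]
    unfolding eventually_sequentially by blast
  have attained: "defect_inf u = enat (nat (defect (pref u (length q))))"
    using assms(4) by (simp only: assms(3)[symmetric])
  have "card (nonpal_factors H (pref u K)) = 2 * card (fresh_pal_factors H q (pref u K))"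
    using card_nonpal_factors_eq_twice_fresh_pref[OF attained \<open>length q \<le> K\<close>]
    by (simp only: assms(3)[symmetric] assms(5))
  moreover have "nonpal_factors H (pref u K) = {w \<in> lang_n u H. \<not> pal w}"
    using nonpal_factors_pref_eq_lang[OF assms(1)] K by (simp add: lang_n_def)
  moreover have "fresh_pal_factors H q (pref u K)
      = {x \<in> lang u. pal x \<and> length x < H \<and> x \<notin> lang_fin q}"
    using K by (intro fresh_pal_factors_pref_eq_lang) auto
  ultimately show ?thesis
    using complexity_eq_pal_complexity_plus_nonpal[of u H] by simp
qed

end
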